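(* Let $G=(V,E)$ be a finite connected graph with $n=|V|$ and let $\{u,v\}\in E$ be a bridge, whose removal separates $G$ into two connected components $G_1$, $G_2$ with vertex sets $V_1\ni u$ and $V_2\ni v$. Assume that $DK=n\mathbf{1}_n$ has a unique solution $K_G:V\to\mathbb{R}$ (the Steinerberger curvature of $G$). Then $$\sum_{x\in V_1}K_G(x)=\sum_{y\in V_2}K_G(y).$$
   Context: All graphs are finite, simple, connected and undirected, with the combinatorial shortest-path distance $d$. For $G=(V,E)$ with $V=\{v_1,\dots,v_n\}$, let $D=(d(v_i,v_j))_{i,j=1}^n$ be its distance matrix and $\mathbf{1}_n\in\mathbb{R}^n$ the all-ones column vector. The Steinerberger curvature $K\in\mathbb{R}^n$ (written $K_i$ or $K(v_i)$) is defined as follows: if $DK=n\mathbf{1}_n$ has a unique solution, $K$ is that solution; if it has several solutions, $K$ is a solution for which $\min_i K_i$ is maximal; if it has no solution, $K=nD^\dagger\mathbf{1}_n$ with $D^\dagger$ the Moore–Penrose pseudoinverse. A bridge is an edge whose removal disconnects the graph. *)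

theory Defs
  imports Complex_Main
begin

definition simple_graph :: "'a set \<Rightarrow> ('a \<Rightarrow> 'a \<Rightarrow> bool) \<Rightarrow> bool" where
  "simple_graph V E \<longleftrightarrow> finite V \<and> (\<forall>x y. E x y \<longrightarrow> x \<in> V \<and> y \<in> V)
     \<and> (\<forall>x y. E x y \<longrightarrow> E y x) \<and> (\<forall>x. \<not> E x x)"

definition graph_connected :: "'a set \<Rightarrow> ('a \<Rightarrow> 'a \<Rightarrow> bool) \<Rightarrow> bool" where
  "graph_connected V E \<longleftrightarrow> V \<noteq> {} \<and> (\<forall>x\<in>V. \<forall>y\<in>V. E\<^sup>*\<^sup>* x y)"

definition gdist :: "('a \<Rightarrow> 'a \<Rightarrow> bool) \<Rightarrow> 'a \<Rightarrow> 'a \<Rightarrow> nat" where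
  "gdist E x y = (LEAST k. (E ^^ k) x y)"

definition remove_edge :: "('a \<Rightarrow> 'a \<Rightarrow> bool) \<Rightarrow> 'a \<Rightarrow> 'a \<Rightarrow> ('a \<Rightarrow> 'a \<Rightarrow> bool)" where
  "remove_edge E u v = (\<lambda>a b. E a b \<and> {a, b} \<noteq> {u, v})"

definition is_bridge :: "'a set \<Rightarrow> ('a \<Rightarrow> 'a \<Rightarrow> bool) \<Rightarrow> 'a \<Rightarrow> 'a \<Rightarrow> bool" where
  "is_bridge V E u v \<longleftrightarrow> E u v \<and> \<not> graph_connected V (remove_edge E u v)"

definition component :: "'a set \<Rightarrow> ('a \<Rightarrow> 'a \<Rightarrow> bool) \<Rightarrow> 'a \<Rightarrow> 'a set" where
  "component V E x = {y \<in> V. E\<^sup>*\<^sup>* x y}"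

definition solves_curv_eq :: "'a set \<Rightarrow> ('a \<Rightarrow> 'a \<Rightarrow> bool) \<Rightarrow> ('a \<Rightarrow> real) \<Rightarrow> bool" where
  "solves_curv_eq V E K \<longleftrightarrow>
     (\<forall>i\<in>V. (\<Sum>j\<in>V. real (gdist E i j) * K j) = real (card V))"

definition unique_curv_solution :: "'a set \<Rightarrow> ('a \<Rightarrow> 'a \<Rightarrow> bool) \<Rightarrow> bool" where
  "unique_curv_solution V E \<longleftrightarrow> (\<exists>K. solves_curv_eq V E K) \<and>
     (\<forall>K1 K2. solves_curv_eq V E K1 \<and> solves_curv_eq V E K2 \<longrightarrow> (\<forall>x\<in>V. K1 x = K2 x))"

end

theory Submission
  imports Defs
begin

text \<open>Removing the bridge {u,v} splits V into the component V1 of u and the component V2 of v,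
  and every walk between them crosses the bridge. Hence d(v,j) = d(u,j) + 1 for j in V1 and
  d(u,j) = d(v,j) + 1 for j in V2. Subtracting the rows of D K = n 1 indexed by u and v therefore
  gives 0 = sum of K over V1 minus sum of K over V2.\<close>

lemma remove_edge_commute: "remove_edge E v u = remove_edge E u v"
  unfolding remove_edge_def by (auto simp: insert_commute)

lemma symp_remove_edge: "symp E \<Longrightarrow> symp (remove_edge E u v)"
  unfolding remove_edge_def symp_def by (auto simp: insert_commute)

lemma simple_graph_symp: "simple_graph V E \<Longrightarrow> symp E"
  unfolding simple_graph_def symp_def by blast

lemma reachable_without_edge:
  assumes "E u v" and "E\<^sup>*\<^sup>* u y"
  shows "(remove_edge E u v)\<^sup>*\<^sup>* u y \<or> (remove_edge E u v)\<^sup>*\<^sup>* v y"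
  using assms(2)
proof (induction rule: rtranclp_induct)
  case base
  then show ?case by simp
next
  case (step y z)
  show ?case
  proof (cases "{y, z} = {u, v}")
    case True
    then have "z = u \<or> z = v" by (metis doubleton_eq_iff)
    then show ?thesis by auto
  next
    case False
    then have "remove_edge E u v y z" using step.hyps(2) unfolding remove_edge_def by simp
    with step.IH show ?thesis by (meson rtranclp.rtrancl_into_rtrancl)
  qed
qed

lemma bridge_components_cover:
  assumes "simple_graph V E" and "graph_connected V E" and "E u v"
  shows "V = component V (remove_edge E u v) u \<union> component V (remove_edge E u v) v"
proof -
  have "u \<in> V" using assms(1,3) unfolding simple_graph_def by blast
  then have "E\<^sup>*\<^sup>* u y" if "y \<in> V" for y
    using assms(2) that unfolding graph_connected_def by blast
  then show ?thesis
    using reachable_without_edge[of E u v] assms(3) unfolding component_def by blast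
qed

lemma bridge_components_disjoint:
  assumes sg: "simple_graph V E" and con: "graph_connected V E" and br: "is_bridge V E u v"
  shows "component V (remove_edge E u v) u \<inter> component V (remove_edge E u v) v = {}"
proof (rule ccontr)
  let ?E = "remove_edge E u v"
  assume "component V ?E u \<inter> component V ?E v \<noteq> {}"
  then obtain w where uw: "?E\<^sup>*\<^sup>* u w" and vw: "?E\<^sup>*\<^sup>* v w"
    unfolding component_def by auto
  have sym: "?E\<^sup>*\<^sup>* y x" if "?E\<^sup>*\<^sup>* x y" for x y
    using that symp_rtranclp[OF symp_remove_edge[OF simple_graph_symp[OF sg]]] by (blast dest: sympD)
  have "?E\<^sup>*\<^sup>* u v" using uw sym[OF vw] by (rule rtranclp_trans)
  then have from_u: "?E\<^sup>*\<^sup>* u x" if "x \<in> V" for x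
    using bridge_components_cover[OF sg con] br that
    unfolding is_bridge_def component_def by (blast intro: rtranclp_trans)
  have "graph_connected V ?E"
    unfolding graph_connected_def
  proof (intro conjI ballI)
    show "V \<noteq> {}" using con unfolding graph_connected_def by simp
  next
    fix x y assume "x \<in> V" "y \<in> V"
    then show "?E\<^sup>*\<^sup>* x y" using from_u sym by (meson rtranclp_trans)
  qed
  then show False using br unfolding is_bridge_def by simp
qed

lemma bridge_crossing_edge:
  assumes sg: "simple_graph V E" and con: "graph_connected V E" and br: "is_bridge V E u v"
    and x: "x \<in> component V (remove_edge E u v) v" and y: "y \<in> component V (remove_edge E u v) u"
    and "E x y"
  shows "x = v \<and> y = u"
proof -
  let ?E = "remove_edge E u v"
  have disj: "component V ?E u \<inter> component V ?E v = {}"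
    by (rule bridge_components_disjoint[OF sg con br])
  have "{x, y} = {u, v}"
  proof (rule ccontr)
    assume "{x, y} \<noteq> {u, v}"
    then have "?E x y" using \<open>E x y\<close> unfolding remove_edge_def by simp
    then have "y \<in> component V ?E v"
      using x y unfolding component_def by (auto intro: rtranclp.rtrancl_into_rtrancl)
    then show False using disj y by blast
  qed
  moreover have "u \<in> component V ?E u"
    using sg br unfolding component_def simple_graph_def is_bridge_def by blast
  ultimately show ?thesis using disj x by (metis disjoint_iff doubleton_eq_iff)
qed

lemma relpowp_gdist: "E\<^sup>*\<^sup>* x y \<Longrightarrow> (E ^^ gdist E x y) x y"
  unfolding gdist_def by (metis LeastI rtranclp_imp_relpowp)

lemma gdist_le: "(E ^^ k) x y \<Longrightarrow> gdist E x y \<le> k"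
  unfolding gdist_def by (rule Least_le)

text \<open>A walk to the side of u that starts on the side of v must cross the bridge from v to u.\<close>

lemma walk_across_bridge_length:
  assumes sg: "simple_graph V E" and con: "graph_connected V E" and br: "is_bridge V E u v"
    and j: "j \<in> component V (remove_edge E u v) u"
  shows "x \<in> component V (remove_edge E u v) v \<Longrightarrow> (E ^^ k) x j \<Longrightarrow> gdist E u j + 1 \<le> k"
proof (induction k arbitrary: x)
  case 0
  then show ?case using j bridge_components_disjoint[OF sg con br] by auto
next
  case (Suc k)
  then obtain y where "E x y" and walk: "(E ^^ k) y j" using relpowp_Suc_E2 by metis
  have "y \<in> V" using sg \<open>E x y\<close> unfolding simple_graph_def by blast
  then consider "y \<in> component V (remove_edge E u v) u" | "y \<in> component V (remove_edge E u v) v"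
    using bridge_components_cover[OF sg con] br unfolding is_bridge_def by blast
  then show ?case
  proof cases
    case 1
    then have "y = u" using bridge_crossing_edge[OF sg con br Suc.prems(1) _ \<open>E x y\<close>] by blast
    then show ?thesis using gdist_le[OF walk] by simp
  next
    case 2
    then show ?thesis using Suc.IH walk by fastforce
  qed
qed

lemma gdist_across_bridge:
  assumes sg: "simple_graph V E" and con: "graph_connected V E" and br: "is_bridge V E u v"
    and j: "j \<in> component V (remove_edge E u v) u"
  shows "gdist E v j = gdist E u j + 1"
proof -
  have "E u v" using br unfolding is_bridge_def by simp
  then have "u \<in> V" "v \<in> V" using sg unfolding simple_graph_def by blast+
  have "j \<in> V" using j unfolding component_def by simp
  have "E\<^sup>*\<^sup>* u j" "E\<^sup>*\<^sup>* v j"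
    using con \<open>u \<in> V\<close> \<open>v \<in> V\<close> \<open>j \<in> V\<close> unfolding graph_connected_def by blast+
  have "v \<in> component V (remove_edge E u v) v" using \<open>v \<in> V\<close> unfolding component_def by simp
  then have "gdist E u j + 1 \<le> gdist E v j"
    using walk_across_bridge_length[OF sg con br j] relpowp_gdist[OF \<open>E\<^sup>*\<^sup>* v j\<close>] by blast
  moreover have "(E ^^ Suc (gdist E u j)) v j"
    using relpowp_Suc_I2 relpowp_gdist[OF \<open>E\<^sup>*\<^sup>* u j\<close>] sg \<open>E u v\<close>
    unfolding simple_graph_def by metis
  then have "gdist E v j \<le> gdist E u j + 1" using gdist_le by fastforce
  ultimately show ?thesis by simp
qed

lemma sum_eq_of_equal_shifted_rows:
  fixes f g K :: "'a \<Rightarrow> real"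
  assumes "finite A" and "finite B" and "A \<inter> B = {}"
    and "\<And>j. j \<in> A \<Longrightarrow> f j = g j + 1" and "\<And>j. j \<in> B \<Longrightarrow> g j = f j + 1"
    and "(\<Sum>j\<in>A \<union> B. g j * K j) = (\<Sum>j\<in>A \<union> B. f j * K j)"
  shows "sum K A = sum K B"
proof -
  have "0 = (\<Sum>j\<in>A \<union> B. (f j - g j) * K j)"
    using assms(6) by (simp add: left_diff_distrib sum_subtractf)
  also have "\<dots> = (\<Sum>j\<in>A. (f j - g j) * K j) + (\<Sum>j\<in>B. (f j - g j) * K j)"
    using assms(1-3) by (rule sum.union_disjoint)
  also have "\<dots> = sum K A - sum K B"
    using assms(4,5) by (simp add: sum_negf)
  finally show ?thesis by simp
qed

theorem mainTheorem3:
  fixes V :: "'a set" and E :: "'a \<Rightarrow> 'a \<Rightarrow> bool" and u v :: 'a and K :: "'a \<Rightarrow> real"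
  assumes "simple_graph V E"
    and "graph_connected V E"
    and "is_bridge V E u v"
    and "unique_curv_solution V E"
    and "solves_curv_eq V E K"
  shows "(\<Sum>x\<in>component V (remove_edge E u v) u. K x)
       = (\<Sum>y\<in>component V (remove_edge E u v) v. K y)"
proof -
  note sg = assms(1) and con = assms(2) and br = assms(3)
  let ?Cu = "component V (remove_edge E u v) u" and ?Cv = "component V (remove_edge E u v) v"
  have "E u v" using br unfolding is_bridge_def by simp
  then have "u \<in> V" "v \<in> V" using sg unfolding simple_graph_def by blast+
  have V: "V = ?Cu \<union> ?Cv" using bridge_components_cover[OF sg con \<open>E u v\<close>] .
  have "finite V" using sg unfolding simple_graph_def by simp
  have br': "is_bridge V E v u"
    using br sg unfolding is_bridge_def simple_graph_def by (simp add: remove_edge_commute)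
  show ?thesis
  proof (rule sum_eq_of_equal_shifted_rows)
    show "finite ?Cu" "finite ?Cv" using \<open>finite V\<close> unfolding component_def by simp_all
    show "?Cu \<inter> ?Cv = {}" using bridge_components_disjoint[OF sg con br] .
    show "real (gdist E v j) = real (gdist E u j) + 1" if "j \<in> ?Cu" for j
      using gdist_across_bridge[OF sg con br that] by simp
    show "real (gdist E u j) = real (gdist E v j) + 1" if "j \<in> ?Cv" for j
      using gdist_across_bridge[OF sg con br'] that by (simp add: remove_edge_commute)
    show "(\<Sum>j\<in>?Cu \<union> ?Cv. real (gdist E u j) * K j) = (\<Sum>j\<in>?Cu \<union> ?Cv. real (gdist E v j) * K j)"
      using assms(5) \<open>u \<in> V\<close> \<open>v \<in> V\<close> V unfolding solves_curv_eq_def by metis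
  qed
qed

end
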